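(* Let $\eta>0$ and $\alpha\in[0,1)$, and run the fixed-share algorithm with parameters $\eta,\alpha$. Then for all $T\ge1$, all loss vectors $\ell_1,\dots,\ell_T\in[0,1]^d$, and all $u_1,\dots,u_T\in\mathbb R_+^d$, \[ \sum_{t=1}^T\|u_t\|_1\hat p_t^\top\ell_t-\sum_{t=1}^Tu_t^\top\ell_t\le\frac{\|u_1\|_1\ln d}{\eta}+\frac\eta8\sum_{t=1}^T\|u_t\|_1+\frac{m(u_1^T)}{\eta}\ln\frac d\alpha+\frac{\sum_{t=2}^T\|u_t\|_1-m(u_1^T)}{\eta}\ln\frac1{1-\alpha}. \]
   Context: Let $d\ge1$ and $\Delta_d=\{q\in[0,1]^d:\sum_{i=1}^d q_i=1\}$. The generalized share algorithm with learning rate $\eta>0$ and mixing functions $\psi_t:[0,1]^{td}\to\Delta_d$ ($t\ge2$) works as follows: $\hat p_1=v_1=(1/d,\dots,1/d)$. At each round $t=1,2,\dots$ it predicts $\hat p_t=(\hat p_{1,t},\dots,\hat p_{d,t})\in\Delta_d$, observes a loss vector $\ell_t=(\ell_{1,t},\dots,\ell_{d,t})\in[0,1]^d$ (arbitrary), and suffers loss $\hat p_t^\top\ell_t$. It then forms the pre-weights $v_{j,t+1}=\hat p_{j,t}e^{-\eta\ell_{j,t}}/\sum_{i=1}^d\hat p_{i,t}e^{-\eta\ell_{i,t}}$ for $j=1,\dots,d$, sets $v_{t+1}=(v_{1,t+1},\dots,v_{d,t+1})$, and defines $\hat p_{t+1}=\psi_{t+1}(V_{t+1})$ where $V_{t+1}=[v_{i,s}]_{1\le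 i\le d,1\le s\le t+1}$ is the $d\times(t+1)$ matrix of all pre-weights so far. The fixed-share algorithm with parameters $\eta>0$, $\alpha\in[0,1]$ is the generalized share algorithm with the mixing rule $\hat p_{j,t+1}=\alpha/d+(1-\alpha)v_{j,t+1}$ for all $j$ and $t\ge1$. For $x,y\in\mathbb R_+^d$, $D_{\mathrm{TV}}(x,y)=\sum_{i:\,x_i\ge y_i}(x_i-y_i)$, and for $u_1,\dots,u_T\in\mathbb R_+^d$, $m(u_1^T)=\sum_{t=2}^T D_{\mathrm{TV}}(u_t,u_{t-1})$. The convention $\ln(d/0)=+\infty$ applies if $\alpha=0$. *)

theory Defs
  imports Complex_Main
begin

text \<open>Vectors in R^d are functions nat => real restricted to indices {..<d}.
  Loss sequence: l t i is the loss of expert i at round t (rounds t = 1,2,...).\<close>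

definition ew_update :: "nat \<Rightarrow> real \<Rightarrow> (nat \<Rightarrow> real) \<Rightarrow> (nat \<Rightarrow> real) \<Rightarrow> (nat \<Rightarrow> real)" where
  "ew_update d \<eta> p l = (\<lambda>j. p j * exp (- \<eta> * l j) / (\<Sum>i<d. p i * exp (- \<eta> * l i)))"

text \<open>Fixed-share predictions: fixed_share d eta alpha l t = p_hat_t for t >= 1
  (the value at t = 0 is a dummy).\<close>
fun fixed_share :: "nat \<Rightarrow> real \<Rightarrow> real \<Rightarrow> (nat \<Rightarrow> nat \<Rightarrow> real) \<Rightarrow> nat \<Rightarrow> (nat \<Rightarrow> real)" where
  "fixed_share d \<eta> \<alpha> l 0 = (\<lambda>j. 1 / real d)"
| "fixed_share d \<eta> \<alpha> l (Suc 0) = (\<lambda>j. 1 / real d)"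
| "fixed_share d \<eta> \<alpha> l (Suc (Suc t)) =
     (\<lambda>j. \<alpha> / real d + (1 - \<alpha>) *
        ew_update d \<eta> (fixed_share d \<eta> \<alpha> l (Suc t)) (l (Suc t)) j)"

definition norm1 :: "nat \<Rightarrow> (nat \<Rightarrow> real) \<Rightarrow> real" where
  "norm1 d x = (\<Sum>i<d. \<bar>x i\<bar>)"

definition dot :: "nat \<Rightarrow> (nat \<Rightarrow> real) \<Rightarrow> (nat \<Rightarrow> real) \<Rightarrow> real" where
  "dot d x y = (\<Sum>i<d. x i * y i)"

definition D_TV :: "nat \<Rightarrow> (nat \<Rightarrow> real) \<Rightarrow> (nat \<Rightarrow> real) \<Rightarrow> real" where
  "D_TV d x y = (\<Sum>i\<in>{i. i < d \<and> x i \<ge> y i}. x i - y i)"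

definition shifts :: "nat \<Rightarrow> (nat \<Rightarrow> nat \<Rightarrow> real) \<Rightarrow> nat \<Rightarrow> real" where
  "shifts d u T = (\<Sum>t=2..T. D_TV d (u t) (u (t - 1)))"

end

theory Submission imports Defs "HOL-Probability.Hoeffding" begin

(* Write P_t for the prediction, W_{t+1} = ew_update(P_t, l_t) for the pre-weights and
   log_weight(u, p) = sum_i u_i ln p_i.
   (1) Round bound: by Hoeffding's lemma applied to the log moment generating function,
       |u_t| P_t.l_t - u_t.l_t <= (log_weight(u_t, W_{t+1}) - log_weight(u_t, P_t)) / eta
                                  + eta/8 |u_t|.
   (2) Mixing bound: since P_t >= (1 - alpha) W_t and P_t >= alpha/d coordinatewise,
       log_weight(u_{t-1}, W_t) - log_weight(u_t, P_t)
         <= (|u_t| - D_TV(u_t, u_{t-1})) ln(1/(1-alpha)) + D_TV(u_t, u_{t-1}) ln(d/alpha).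
   (3) Telescoping: the sum over t of the potential differences in (1) is bounded by the
       end terms (log_weight(u_T, W_{T+1}) <= 0, log_weight(u_1, P_1) = -|u_1| ln d) plus the
       sum of the mixing bounds (2).
   Summing (1) and inserting (3) gives the theorem. When alpha = 0 the side condition
   shifts = 0 makes every D_TV term vanish. *)

text \<open>Probability vectors on \<open>{..<d}\<close> with strictly positive entries; all weight vectors
  of fixed share are of this kind, so their logarithms are finite.\<close>
definition pos_distr :: "nat \<Rightarrow> (nat \<Rightarrow> real) \<Rightarrow> bool" where
  "pos_distr d p \<longleftrightarrow> (\<forall>i<d. 0 < p i) \<and> (\<Sum>i<d. p i) = 1"

definition log_weight :: "nat \<Rightarrow> (nat \<Rightarrow> real) \<Rightarrow> (nat \<Rightarrow> real) \<Rightarrow> real" where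
  "log_weight d u p = (\<Sum>i<d. u i * ln (p i))"

lemma pos_distr_nonempty: "pos_distr d p \<Longrightarrow> d \<noteq> 0"
  by (cases d) (auto simp: pos_distr_def)

lemma pos_distr_le_1:
  assumes "pos_distr d p" "i < d"
  shows "p i \<le> 1"
proof -
  have "p i \<le> (\<Sum>i<d. p i)"
    using assms by (intro member_le_sum) (auto simp: pos_distr_def less_imp_le)
  then show ?thesis using assms(1) by (simp add: pos_distr_def)
qed

lemma log_weight_nonpos:
  assumes "pos_distr d p" "\<forall>i<d. 0 \<le> u i"
  shows "log_weight d u p \<le> 0"
  unfolding log_weight_def
proof (intro sum_nonpos mult_nonneg_nonpos)
  fix i assume "i \<in> {..<d}"
  then have "0 < p i" "p i \<le> 1" using assms pos_distr_le_1 by (auto simp: pos_distr_def)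
  then show "ln (p i) \<le> 0" by simp
qed (use assms in auto)

lemma uniform_pos_distr: "d \<ge> 1 \<Longrightarrow> pos_distr d (\<lambda>j. 1 / real d)"
  by (simp add: pos_distr_def)

lemma norm1_nonneg_eq: "\<forall>i<d. 0 \<le> u i \<Longrightarrow> norm1 d u = (\<Sum>i<d. u i)"
  unfolding norm1_def by (intro sum.cong) auto

lemma norm1_nonneg: "0 \<le> norm1 d u"
  unfolding norm1_def by (intro sum_nonneg) auto

text \<open>Total variation as a sum of positive parts, which makes it additive in the coordinates.\<close>
lemma D_TV_pos_part: "D_TV d x y = (\<Sum>i<d. max (x i - y i) 0)"
proof -
  have "{i. i < d \<and> x i \<ge> y i} = {i \<in> {..<d}. y i \<le> x i}" by auto
  then have "D_TV d x y = (\<Sum>i<d. if y i \<le> x i then x i - y i else 0)"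
    unfolding D_TV_def by (simp only: sum.inter_filter[OF finite_lessThan, symmetric])
  also have "\<dots> = (\<Sum>i<d. max (x i - y i) 0)" by (intro sum.cong) auto
  finally show ?thesis .
qed

lemma D_TV_nonneg: "0 \<le> D_TV d x y"
  unfolding D_TV_pos_part by (intro sum_nonneg) auto

lemma ew_update_pos_distr:
  assumes "pos_distr d p"
  shows "pos_distr d (ew_update d \<eta> p l)"
proof -
  have "d \<noteq> 0" using assms by (rule pos_distr_nonempty)
  then have Z: "0 < (\<Sum>i<d. p i * exp (- \<eta> * l i))"
    using assms by (intro sum_pos) (auto simp: pos_distr_def)
  then show ?thesis
    using assms unfolding pos_distr_def ew_update_def
    by (auto simp: sum_divide_distrib[symmetric])
qed

lemma mix_pos_distr:
  assumes "0 \<le> \<alpha>" "\<alpha> < 1" "pos_distr d w"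
  shows "pos_distr d (\<lambda>j. \<alpha> / real d + (1 - \<alpha>) * w j)"
proof -
  have "d \<noteq> 0" using assms(3) by (rule pos_distr_nonempty)
  moreover have "\<forall>i<d. 0 < \<alpha> / real d + (1 - \<alpha>) * w i"
    using assms by (auto simp: pos_distr_def intro: add_nonneg_pos)
  ultimately show ?thesis
    using assms(3) by (simp add: pos_distr_def sum.distrib sum_distrib_left[symmetric])
qed

lemma fixed_share_pos_distr:
  assumes "d \<ge> 1" "0 \<le> \<alpha>" "\<alpha> < 1"
  shows "pos_distr d (fixed_share d \<eta> \<alpha> l t)"
proof (cases t)
  case 0
  then show ?thesis using assms by (simp add: uniform_pos_distr)
next
  case (Suc k)
  have "pos_distr d (fixed_share d \<eta> \<alpha> l (Suc k))"
    by (induction k)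
      (simp_all add: assms uniform_pos_distr[OF assms(1)] mix_pos_distr ew_update_pos_distr)
  then show ?thesis using Suc by simp
qed

lemma fixed_share_rec:
  assumes "t \<ge> 2"
  shows "fixed_share d \<eta> \<alpha> l t = (\<lambda>j. \<alpha> / real d + (1 - \<alpha>) *
           ew_update d \<eta> (fixed_share d \<eta> \<alpha> l (t - 1)) (l (t - 1)) j)"
proof -
  obtain k where "t = Suc (Suc k)" using assms by (metis add_2_eq_Suc le_Suc_ex)
  then show ?thesis by simp
qed

section \<open>Step (1): the exponential-weights round\<close>

lemma exp_convex_bound:
  fixes \<eta> x :: real assumes "0 \<le> x" "x \<le> 1"
  shows "exp (-\<eta> * x) \<le> (1 - x) + x * exp (-\<eta>)"
proof -
  have "exp (1 * ((1 - x) *\<^sub>R 0 + x *\<^sub>R (-\<eta>))) \<le> (1 - x) * exp (1 * 0) + x * exp (1 * (-\<eta>))"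
    by (rule convex_onD[OF convex_on_exp]) (use assms in auto)
  thus ?thesis by (simp add: mult.commute)
qed

lemma log_mgf_hoeffding:
  fixes \<eta> :: real and p q :: "nat \<Rightarrow> real"
  assumes "\<eta> > 0" "\<And>i. i < d \<Longrightarrow> 0 \<le> p i" "(\<Sum>i<d. p i) = 1"
    "\<And>i. i < d \<Longrightarrow> 0 \<le> q i \<and> q i \<le> 1"
  shows "ln (\<Sum>i<d. p i * exp (-\<eta> * q i)) \<le> -\<eta> * (\<Sum>i<d. p i * q i) + \<eta>\<^sup>2 / 8"
proof -
  define m where "m = (\<Sum>i<d. p i * q i)"
  have m0: "0 \<le> m" unfolding m_def using assms by (auto intro!: sum_nonneg)
  have "m \<le> (\<Sum>i<d. p i * 1)" unfolding m_def
    by (rule sum_mono) (metis assms(2,4) lessThan_iff mult_left_mono)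
  hence m1: "m \<le> 1" using assms(3) by simp
  have "exp (-\<eta>) = (\<Sum>i<d. p i * exp (-\<eta>))"
    using assms(3) by (simp add: sum_distrib_right[symmetric])
  also have "\<dots> \<le> (\<Sum>i<d. p i * exp (-\<eta> * q i))"
    using assms by (auto intro!: sum_mono mult_left_mono)
  finally have Zpos: "0 < (\<Sum>i<d. p i * exp (-\<eta> * q i))" by (metis exp_gt_zero less_le_trans)
  have "(\<Sum>i<d. p i * exp (-\<eta> * q i)) \<le> (\<Sum>i<d. p i * ((1 - q i) + q i * exp (-\<eta>)))"
    using assms exp_convex_bound[of "q _" \<eta>] by (auto intro!: sum_mono mult_left_mono)
  also have "\<dots> = (\<Sum>i<d. p i) - m + m * exp (-\<eta>)"
    by (simp add: m_def algebra_simps sum.distrib sum_subtractf sum_distrib_left)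
  also have "\<dots> = exp (-\<eta>) * (1 + (1 - m) * (exp \<eta> - 1))"
    using assms(3) by (simp add: algebra_simps exp_minus field_simps)
  finally have Zle: "(\<Sum>i<d. p i * exp (-\<eta> * q i)) \<le> exp (-\<eta>) * (1 + (1 - m) * (exp \<eta> - 1))" .
  have pos2: "1 + (1 - m) * (exp \<eta> - 1) \<ge> 1" using m1 assms(1) by simp
  have "ln (\<Sum>i<d. p i * exp (-\<eta> * q i)) \<le> ln (exp (-\<eta>) * (1 + (1 - m) * (exp \<eta> - 1)))"
    using Zpos Zle by simp
  also have "\<dots> = -\<eta> + ln (1 + (1 - m) * (exp \<eta> - 1))"
    using pos2 by (simp add: ln_mult)
  also have "\<dots> \<le> -\<eta> * m + \<eta>\<^sup>2 / 8"
    using Hoeffdings_lemma_aux[of \<eta> "1 - m"] assms(1) m1 by (simp add: algebra_simps)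
  finally show ?thesis unfolding m_def .
qed

text \<open>Exact change of the potential under one exponential-weights update:
  \<open>ln W\<^sub>i = ln p\<^sub>i - \<eta> l\<^sub>i - ln Z\<close> with normaliser \<open>Z\<close>.\<close>
lemma ew_log_weight_gain:
  assumes "pos_distr d p"
  shows "log_weight d u (ew_update d \<eta> p l) - log_weight d u p
           = - \<eta> * dot d u l - (\<Sum>i<d. u i) * ln (\<Sum>i<d. p i * exp (- \<eta> * l i))"
proof -
  define Z where "Z = (\<Sum>i<d. p i * exp (- \<eta> * l i))"
  have "d \<noteq> 0" using assms by (rule pos_distr_nonempty)
  then have Zpos: "0 < Z" unfolding Z_def
    using assms by (intro sum_pos) (auto simp: pos_distr_def)
  have ln_W: "ln (ew_update d \<eta> p l i) - ln (p i) = - \<eta> * l i - ln Z" if "i < d" for i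
  proof -
    have "ew_update d \<eta> p l i = p i * exp (- \<eta> * l i) / Z"
      unfolding ew_update_def Z_def by simp
    moreover have "0 < p i" using assms that by (simp add: pos_distr_def)
    ultimately show ?thesis using Zpos by (simp add: ln_div ln_mult)
  qed
  have "log_weight d u (ew_update d \<eta> p l) - log_weight d u p
          = (\<Sum>i<d. u i * (ln (ew_update d \<eta> p l i) - ln (p i)))"
    unfolding log_weight_def by (simp add: sum_subtractf right_diff_distrib)
  also have "\<dots> = (\<Sum>i<d. (- \<eta>) * (u i * l i) - ln Z * u i)"
  proof (intro sum.cong refl)
    fix i assume "i \<in> {..<d}"
    then show "u i * (ln (ew_update d \<eta> p l i) - ln (p i)) = (- \<eta>) * (u i * l i) - ln Z * u i"
      by (simp only: ln_W lessThan_iff) (simp add: algebra_simps)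
  qed
  also have "\<dots> = - \<eta> * dot d u l - (\<Sum>i<d. u i) * ln Z"
    by (simp add: sum_subtractf sum_distrib_left dot_def mult.commute)
  finally show ?thesis unfolding Z_def .
qed

lemma ew_round_bound:
  assumes "\<eta> > 0" "pos_distr d p" "\<forall>i<d. 0 \<le> l i \<and> l i \<le> 1" "\<forall>i<d. 0 \<le> u i"
  shows "norm1 d u * dot d p l - dot d u l
           \<le> (log_weight d u (ew_update d \<eta> p l) - log_weight d u p) / \<eta> + \<eta> / 8 * norm1 d u"
proof -
  define Z where "Z = (\<Sum>i<d. p i * exp (- \<eta> * l i))"
  have gain: "log_weight d u (ew_update d \<eta> p l) - log_weight d u p
                = - \<eta> * dot d u l - norm1 d u * ln Z"
    using ew_log_weight_gain[OF assms(2)] norm1_nonneg_eq[OF assms(4)] by (simp add: Z_def)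
  have "ln Z \<le> - \<eta> * dot d p l + \<eta>\<^sup>2 / 8"
    unfolding Z_def dot_def
    by (rule log_mgf_hoeffding) (use assms in \<open>auto simp: pos_distr_def less_imp_le\<close>)
  then have "norm1 d u * ln Z \<le> norm1 d u * (- \<eta> * dot d p l + \<eta>\<^sup>2 / 8)"
    using norm1_nonneg by (rule mult_left_mono)
  then show ?thesis
    using assms(1) unfolding gain by (simp add: field_simps power2_eq_square)
qed

section \<open>Step (2): the mixing step\<close>

text \<open>Coordinatewise comparison of \<open>a x - b y\<close>: the common mass \<open>min a b\<close> pays the ratio bound
  \<open>L\<close>, the newly arriving mass \<open>(b - a)\<^sup>+\<close> pays \<open>-y\<close>.\<close>
lemma split_mass_bound:
  fixes a b x y L :: real
  assumes "0 \<le> a" "0 \<le> b" "x \<le> 0" "x - y \<le> L"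
  shows "a * x - b * y \<le> min a b * L + max (b - a) 0 * (- y)"
proof (cases "a \<le> b")
  case True
  have "a * (x - y) \<le> a * L" using assms by (intro mult_left_mono) auto
  then show ?thesis using True by (simp add: algebra_simps)
next
  case False
  have "b * (x - y) \<le> b * L" using assms by (intro mult_left_mono) auto
  moreover have "(a - b) * x \<le> 0" using False assms by (simp add: mult_nonneg_nonpos)
  ultimately show ?thesis using False by (simp add: algebra_simps)
qed

text \<open>Mass kept costs \<open>ln (1/(1-\<alpha>))\<close>, mass shifted costs \<open>ln (d/\<alpha>)\<close>.\<close>
lemma mixing_step_bound:
  assumes "0 \<le> \<alpha>" "\<alpha> < 1" "pos_distr d w" "\<forall>i<d. 0 \<le> u i" "\<forall>i<d. 0 \<le> u' i"
    and shift: "\<alpha> > 0 \<or> D_TV d u' u = 0"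
  shows "log_weight d u w - log_weight d u' (\<lambda>j. \<alpha> / real d + (1 - \<alpha>) * w j)
           \<le> (norm1 d u' - D_TV d u' u) * ln (1 / (1 - \<alpha>)) + D_TV d u' u * ln (real d / \<alpha>)"
proof -
  define q where "q j = \<alpha> / real d + (1 - \<alpha>) * w j" for j
  define new where "new i = max (u' i - u i) 0" for i
  have q_pos: "0 < q i" if "i < d" for i
    using mix_pos_distr[OF assms(1-3)] that by (simp add: q_def pos_distr_def)
  have keep: "ln (w i) - ln (q i) \<le> ln (1 / (1 - \<alpha>))" if i: "i < d" for i
  proof -
    have wpos: "0 < w i" using assms(3) i by (simp add: pos_distr_def)
    have "(1 - \<alpha>) * w i \<le> q i" using assms(1) by (simp add: q_def)
    then have "ln ((1 - \<alpha>) * w i) \<le> ln (q i)"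
      using assms(2) wpos q_pos[OF i] by simp
    then show ?thesis using assms(2) wpos by (simp add: ln_mult ln_div)
  qed
  have "log_weight d u w - log_weight d u' q = (\<Sum>i<d. u i * ln (w i) - u' i * ln (q i))"
    unfolding log_weight_def by (simp add: sum_subtractf)
  also have "\<dots> \<le> (\<Sum>i<d. min (u i) (u' i) * ln (1 / (1 - \<alpha>)) + new i * (- ln (q i)))"
    unfolding new_def
  proof (intro sum_mono split_mass_bound)
    fix i assume "i \<in> {..<d}"
    then show "ln (w i) \<le> 0"
      using assms(3) pos_distr_le_1[OF assms(3)] by (simp add: pos_distr_def)
  qed (use assms keep in auto)
  also have "\<dots> = (\<Sum>i<d. min (u i) (u' i)) * ln (1 / (1 - \<alpha>)) + (\<Sum>i<d. new i * (- ln (q i)))"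
    by (simp only: sum.distrib sum_distrib_right)
  also have "(\<Sum>i<d. min (u i) (u' i)) = (\<Sum>i<d. u' i - new i)"
    by (intro sum.cong) (auto simp: new_def)
  also have "\<dots> = norm1 d u' - D_TV d u' u"
    using assms(5) by (simp add: norm1_nonneg_eq D_TV_pos_part new_def sum_subtractf)
  also have "(\<Sum>i<d. new i * (- ln (q i))) \<le> D_TV d u' u * ln (real d / \<alpha>)"
  proof (cases "\<alpha> > 0")
    case True
    have "(\<Sum>i<d. new i * (- ln (q i))) \<le> (\<Sum>i<d. new i * ln (real d / \<alpha>))"
    proof (intro sum_mono mult_left_mono)
      fix i assume "i \<in> {..<d}"
      then have i: "i < d" by simp
      have "\<alpha> / real d \<le> q i"
        using assms(2,3) i by (simp add: q_def pos_distr_def less_imp_le)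
      then have "ln (\<alpha> / real d) \<le> ln (q i)"
        using True q_pos[OF i] i by simp
      then show "- ln (q i) \<le> ln (real d / \<alpha>)" using True i by (simp add: ln_div)
    qed (simp add: new_def)
    then show ?thesis by (simp add: D_TV_pos_part new_def sum_distrib_right)
  next
    case False
    then have "D_TV d u' u = 0" using shift by simp
    then have "\<forall>i\<in>{..<d}. new i = 0"
      unfolding D_TV_pos_part new_def by (subst (asm) sum_nonneg_eq_0_iff) auto
    then show ?thesis using \<open>D_TV d u' u = 0\<close> by simp
  qed
  finally show ?thesis by (simp add: q_def)
qed

section \<open>Step (3): telescoping the potential\<close>

lemma sum_telescope_shifted:
  fixes A B :: "nat \<Rightarrow> real"
  assumes "T \<ge> 1"
  shows "(\<Sum>t=1..T. A t - B t) = A T - B 1 + (\<Sum>t=2..T. A (t - 1) - B t)"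
  using assms
proof (induction T rule: dec_induct)
  case (step n)
  have "(\<Sum>t=2..Suc n. A (t - 1) - B t) = (\<Sum>t=2..n. A (t - 1) - B t) + (A n - B (Suc n))"
    using step(1) by simp
  then show ?case using step by simp
qed simp

lemma shifts_zero_D_TV:
  assumes "shifts d u T = 0" "t \<in> {2..T}"
  shows "D_TV d (u t) (u (t - 1)) = 0"
  using assms D_TV_nonneg unfolding shifts_def by (subst (asm) sum_nonneg_eq_0_iff) auto

lemma fixed_share_potential_bound:
  fixes \<eta> :: real and l u :: "nat \<Rightarrow> nat \<Rightarrow> real"
  assumes "d \<ge> 1" "0 \<le> \<alpha>" "\<alpha> < 1" "T \<ge> 1"
    and u_nonneg: "\<And>t i. t \<in> {1..T} \<Longrightarrow> i < d \<Longrightarrow> 0 \<le> u t i"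
    and shift: "\<alpha> > 0 \<or> shifts d u T = 0"
  defines "P \<equiv> fixed_share d \<eta> \<alpha> l"
  shows "(\<Sum>t=1..T. log_weight d (u t) (ew_update d \<eta> (P t) (l t)) - log_weight d (u t) (P t))
           \<le> norm1 d (u 1) * ln (real d)
             + ((\<Sum>t=2..T. norm1 d (u t)) - shifts d u T) * ln (1 / (1 - \<alpha>))
             + shifts d u T * ln (real d / \<alpha>)"
proof -
  define A where "A t = log_weight d (u t) (ew_update d \<eta> (P t) (l t))" for t
  define B where "B t = log_weight d (u t) (P t)" for t
  define S where "S t = D_TV d (u t) (u (t - 1))" for t
  have P_distr: "pos_distr d (P t)" for t
    unfolding P_def using fixed_share_pos_distr[OF assms(1-3)] .
  have A_T: "A T \<le> 0"
    unfolding A_def using assms(4) u_nonneg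
    by (intro log_weight_nonpos ew_update_pos_distr P_distr) auto
  have B_1: "B 1 = - norm1 d (u 1) * ln (real d)"
    using assms(1,4) u_nonneg
    by (simp add: B_def P_def log_weight_def ln_div norm1_nonneg_eq sum_distrib_right sum_negf)
  have cross: "A (t - 1) - B t \<le> (norm1 d (u t) - S t) * ln (1 / (1 - \<alpha>)) + S t * ln (real d / \<alpha>)"
    if t: "t \<in> {2..T}" for t
  proof -
    have t2: "t \<ge> 2" and "t \<in> {1..T}" "t - 1 \<in> {1..T}" using t by auto
    then have "\<forall>i<d. 0 \<le> u t i" "\<forall>i<d. 0 \<le> u (t - 1) i"
      using u_nonneg by blast+
    moreover have "\<alpha> > 0 \<or> S t = 0"
      using shift shifts_zero_D_TV[OF _ t] by (auto simp: S_def)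
    ultimately show ?thesis
      unfolding A_def B_def S_def P_def fixed_share_rec[OF t2]
      by (intro mixing_step_bound[OF assms(2,3)] ew_update_pos_distr P_distr[unfolded P_def])
  qed
  have "(\<Sum>t=1..T. A t - B t) = A T - B 1 + (\<Sum>t=2..T. A (t - 1) - B t)"
    by (rule sum_telescope_shifted[OF assms(4)])
  also have "\<dots> \<le> norm1 d (u 1) * ln (real d)
      + (\<Sum>t=2..T. (norm1 d (u t) - S t) * ln (1 / (1 - \<alpha>)) + S t * ln (real d / \<alpha>))"
  proof -
    have "(\<Sum>t=2..T. A (t - 1) - B t)
        \<le> (\<Sum>t=2..T. (norm1 d (u t) - S t) * ln (1 / (1 - \<alpha>)) + S t * ln (real d / \<alpha>))"
      by (intro sum_mono cross)
    then show ?thesis using A_T B_1 by simp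
  qed
  also have "\<dots> = norm1 d (u 1) * ln (real d)
      + ((\<Sum>t=2..T. norm1 d (u t)) - shifts d u T) * ln (1 / (1 - \<alpha>))
      + shifts d u T * ln (real d / \<alpha>)"
    by (simp only: shifts_def S_def sum.distrib sum_distrib_right[symmetric] sum_subtractf add.assoc)
  finally show ?thesis unfolding A_def B_def .
qed

theorem theorem2:
  fixes d T :: nat and \<eta> \<alpha> :: real
    and l u :: "nat \<Rightarrow> nat \<Rightarrow> real"
  assumes "d \<ge> 1" and "\<eta> > 0" and "0 \<le> \<alpha>" and "\<alpha> < 1" and "T \<ge> 1"
    and "\<And>t i. t \<in> {1..T} \<Longrightarrow> i < d \<Longrightarrow> 0 \<le> l t i \<and> l t i \<le> 1"
    and "\<And>t i. t \<in> {1..T} \<Longrightarrow> i < d \<Longrightarrow> 0 \<le> u t i"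
  shows "(\<alpha> > 0 \<or> shifts d u T = 0) \<longrightarrow>
    (\<Sum>t=1..T. norm1 d (u t) * dot d (fixed_share d \<eta> \<alpha> l t) (l t))
      - (\<Sum>t=1..T. dot d (u t) (l t))
    \<le> norm1 d (u 1) * ln (real d) / \<eta>
      + \<eta> / 8 * (\<Sum>t=1..T. norm1 d (u t))
      + shifts d u T / \<eta> * ln (real d / \<alpha>)
      + ((\<Sum>t=2..T. norm1 d (u t)) - shifts d u T) / \<eta> * ln (1 / (1 - \<alpha>))"
proof
  assume shift: "\<alpha> > 0 \<or> shifts d u T = 0"
  define P where "P = fixed_share d \<eta> \<alpha> l"
  define G where "G t = log_weight d (u t) (ew_update d \<eta> (P t) (l t)) - log_weight d (u t) (P t)" for t
  have round: "norm1 d (u t) * dot d (P t) (l t) - dot d (u t) (l t) \<le> G t / \<eta> + \<eta> / 8 * norm1 d (u t)"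
    if "t \<in> {1..T}" for t
    unfolding G_def P_def using assms that
    by (intro ew_round_bound fixed_share_pos_distr) auto
  have "(\<Sum>t=1..T. norm1 d (u t) * dot d (P t) (l t)) - (\<Sum>t=1..T. dot d (u t) (l t))
      = (\<Sum>t=1..T. norm1 d (u t) * dot d (P t) (l t) - dot d (u t) (l t))"
    by (simp add: sum_subtractf)
  also have "\<dots> \<le> (\<Sum>t=1..T. G t / \<eta> + \<eta> / 8 * norm1 d (u t))"
    by (intro sum_mono round)
  also have "\<dots> = (\<Sum>t=1..T. G t) / \<eta> + \<eta> / 8 * (\<Sum>t=1..T. norm1 d (u t))"
    by (simp add: sum.distrib sum_divide_distrib sum_distrib_left)
  also have "(\<Sum>t=1..T. G t) \<le> norm1 d (u 1) * ln (real d)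
      + ((\<Sum>t=2..T. norm1 d (u t)) - shifts d u T) * ln (1 / (1 - \<alpha>))
      + shifts d u T * ln (real d / \<alpha>)"
    unfolding G_def P_def using assms shift by (intro fixed_share_potential_bound) auto
  finally show "(\<Sum>t=1..T. norm1 d (u t) * dot d (fixed_share d \<eta> \<alpha> l t) (l t))
      - (\<Sum>t=1..T. dot d (u t) (l t)) \<le> norm1 d (u 1) * ln (real d) / \<eta>
      + \<eta> / 8 * (\<Sum>t=1..T. norm1 d (u t))
      + shifts d u T / \<eta> * ln (real d / \<alpha>)
      + ((\<Sum>t=2..T. norm1 d (u t)) - shifts d u T) / \<eta> * ln (1 / (1 - \<alpha>))"
    using assms(2) unfolding P_def by (simp add: divide_right_mono add_divide_distrib)
qed

end
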